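(* Let $(\mathbf{X},Y,\hat Y)$ be random variables on $\mathcal{X}\times\mathcal{Y}\times\mathcal{Y}$ with $P(\hat Y=i\mid Y=j)=p_{i,j}$ for all $i,j\in\{1,\dots,K\}$ (so $\sum_{i=1}^K p_{i,j}=1$ for each $j$), and assume $\hat Y$ is conditionally independent of $\mathbf{X}$ given $Y$ (i.e. $P(\mathbf{X}\mid Y)=P(\mathbf{X}\mid Y,\hat Y)$), so that $P(\hat Y=i\mid\mathbf{X})=\sum_{j=1}^K p_{i,j}P(Y=j\mid\mathbf{X})$. Let $Q$ be any probability distribution on a hypothesis class $\mathcal{H}$ and let $\hat M$ be a random variable such that, conditionally on $\mathbf{X}=\mathbf{x}$, $\hat M$ is discrete and equals $M_Q(\mathbf{x},i)$ with probability $P(\hat Y=i\mid\mathbf{X}=\mathbf{x})$, $i=1,\dots,K$. Let $\mu^{\hat M}_1=\mathbb{E}[\hat M]$, $\mu^{\hat M}_2=\mathbb{E}[\hat M^2]$, and $\beta=\max_{i\in\{1,\dots,K\}}\sum_{j=1}^K p_{i,j}$. If $\mu^{\hat M}_1>0$, then $$R(B_{Q_{\mathrm{opt}}})\le 1-\frac{1}{\beta}\cdot\frac{(\mu^{\hat M}_1)^2}{\mu^{\hat M}_2}.$$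
   Context: $\mathcal{X}\subset\mathbb{R}^d$, $\mathcal{Y}=\{1,\dots,K\}$, $K\ge2$; $\mathcal{H}$ is a class of classifiers $h:\mathcal{X}\to\mathcal{Y}$. For a distribution $Q$ on $\mathcal{H}$: votes $v_Q(\mathbf{x},c)=\mathbb{E}_{h\sim Q}\mathbb{1}[h(\mathbf{x})=c]$, margin $M_Q(\mathbf{x},y)=v_Q(\mathbf{x},y)-\max_{c\ne y}v_Q(\mathbf{x},c)$. $B_{Q_{\mathrm{opt}}}$ denotes the optimal (maximum a posteriori) classifier $B_{Q_{\mathrm{opt}}}(\mathbf{x})=\arg\max_{c\in\mathcal{Y}}P(Y=c\mid\mathbf{X}=\mathbf{x})$, whose risk with respect to the true label is $R(B_{Q_{\mathrm{opt}}})=\mathbb{E}_{\mathbf{X}}\big[1-\max_{j}P(Y=j\mid\mathbf{X})\big]$. $\hat Y$ is an imperfect (noisy) version of the label $Y$. *)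

theory Defs
  imports "HOL-Probability.Probability"
begin

text \<open>Labels are the natural numbers 1..K. A classifier is a function 'a => nat.
  A distribution Q on classifiers is a probability measure on the function space.\<close>

definition votes :: "('a \<Rightarrow> nat) measure \<Rightarrow> 'a \<Rightarrow> nat \<Rightarrow> real" where
  "votes Q x c = measure Q {h \<in> space Q. h x = c}"

definition margin :: "('a \<Rightarrow> nat) measure \<Rightarrow> nat \<Rightarrow> 'a \<Rightarrow> nat \<Rightarrow> real" where
  "margin Q K x y = votes Q x y - Max ((\<lambda>c. votes Q x c) ` ({1..K} - {y}))"

text \<open>P(Yhat = i | X = x) = sum_j p i j * P(Y = j | X = x)\<close>
definition noisy_post :: "(nat \<Rightarrow> nat \<Rightarrow> real) \<Rightarrow> (nat \<Rightarrow> 'a \<Rightarrow> real) \<Rightarrow> nat \<Rightarrow> nat \<Rightarrow> 'a \<Rightarrow> real" where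
  "noisy_post p \<eta> K i x = (\<Sum>j=1..K. p i j * \<eta> j x)"

text \<open>Risk of the optimal (MAP) classifier: E_X [1 - max_j P(Y=j|X)].\<close>
definition bayes_risk :: "'w measure \<Rightarrow> ('w \<Rightarrow> 'a) \<Rightarrow> (nat \<Rightarrow> 'a \<Rightarrow> real) \<Rightarrow> nat \<Rightarrow> real" where
  "bayes_risk M X \<eta> K = (\<integral>\<omega>. 1 - Max ((\<lambda>j. \<eta> j (X \<omega>)) ` {1..K}) \<partial>M)"

end

theory Submission
  imports Defs
begin

text \<open>
  The Bayes classifier is correct with probability \<open>E[max_j P(Y = j | X)]\<close>. Cauchy--Schwarz
  applied to \<open>max(M, 0)\<close> and the indicator of \<open>M > 0\<close> gives the second-moment bound
  \<open>E[M]\<^sup>2 \<le> E[M\<^sup>2] P(M > 0)\<close>. Given \<open>X = x\<close>, at most one label has positive margin,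
  so \<open>P(M > 0 | X = x)\<close> is at most a single noisy posterior
  \<open>\<Sum>\<^sub>j p i j P(Y = j | X = x) \<le> \<beta> max\<^sub>j P(Y = j | X = x)\<close>, where \<open>\<beta>\<close> is the largest
  row sum of \<open>p\<close>.
\<close>

lemma quadratic_nonneg_imp_square_le:
  fixes a b s :: real
  assumes nonneg: "\<And>c. 0 \<le> a - 2 * c * b + c\<^sup>2 * s" and "0 \<le> s"
  shows "b\<^sup>2 \<le> a * s"
proof (cases "s = 0")
  case True
  show ?thesis
  proof (rule ccontr)
    assume "\<not> b\<^sup>2 \<le> a * s"
    then have "b \<noteq> 0" using True by simp
    have "0 \<le> a - 2 * ((a + 1) / (2 * b)) * b" using nonneg[of "(a + 1) / (2 * b)"] True by simp
    also have "\<dots> = -1" using \<open>b \<noteq> 0\<close> by (simp add: field_simps)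
    finally show False by simp
  qed
next
  case False
  then have "0 < s" using assms(2) by simp
  have "0 \<le> a - 2 * (b / s) * b + (b / s)\<^sup>2 * s" by (rule nonneg)
  also have "\<dots> = a - b\<^sup>2 / s" using \<open>0 < s\<close> by (simp add: field_simps power2_eq_square)
  finally show ?thesis using \<open>0 < s\<close> by (simp add: field_simps)
qed

lemma Cauchy_Schwarz_integral:
  fixes f g :: "'a \<Rightarrow> real"
  assumes [measurable]: "f \<in> borel_measurable M" "g \<in> borel_measurable M"
    and f2: "integrable M (\<lambda>x. (f x)\<^sup>2)" and g2: "integrable M (\<lambda>x. (g x)\<^sup>2)"
  shows "(\<integral>x. f x * g x \<partial>M)\<^sup>2 \<le> (\<integral>x. (f x)\<^sup>2 \<partial>M) * (\<integral>x. (g x)\<^sup>2 \<partial>M)"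
proof (rule quadratic_nonneg_imp_square_le)
  have fg: "integrable M (\<lambda>x. f x * g x)"
  proof (rule Bochner_Integration.integrable_bound[OF Bochner_Integration.integrable_add[OF f2 g2]])
    show "AE x in M. norm (f x * g x) \<le> norm ((f x)\<^sup>2 + (g x)\<^sup>2)"
    proof (intro AE_I2)
      fix x
      have "2 * (\<bar>f x\<bar> * \<bar>g x\<bar>) \<le> (f x)\<^sup>2 + (g x)\<^sup>2"
        using sum_squares_bound[of "\<bar>f x\<bar>" "\<bar>g x\<bar>"] by (simp add: mult.assoc)
      moreover have "0 \<le> \<bar>f x\<bar> * \<bar>g x\<bar>" by simp
      ultimately have "\<bar>f x\<bar> * \<bar>g x\<bar> \<le> (f x)\<^sup>2 + (g x)\<^sup>2" by linarith
      then show "norm (f x * g x) \<le> norm ((f x)\<^sup>2 + (g x)\<^sup>2)"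
        by (simp add: abs_mult)
    qed
  qed measurable
  fix c :: real
  have "0 \<le> (\<integral>x. (f x - c * g x)\<^sup>2 \<partial>M)" by simp
  also have "\<dots> = (\<integral>x. (f x)\<^sup>2 - 2 * c * (f x * g x) + c\<^sup>2 * (g x)\<^sup>2 \<partial>M)"
    by (simp add: power2_eq_square algebra_simps)
  also have "\<dots> = (\<integral>x. (f x)\<^sup>2 \<partial>M) - 2 * c * (\<integral>x. f x * g x \<partial>M) + c\<^sup>2 * (\<integral>x. (g x)\<^sup>2 \<partial>M)"
    using f2 g2 fg by simp
  finally show "0 \<le> (\<integral>x. (f x)\<^sup>2 \<partial>M) - 2 * c * (\<integral>x. f x * g x \<partial>M) + c\<^sup>2 * (\<integral>x. (g x)\<^sup>2 \<partial>M)" .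
qed simp

lemma (in prob_space) expectation_square_le_second_moment_prob_pos:
  fixes f :: "'a \<Rightarrow> real"
  assumes [measurable]: "f \<in> borel_measurable M"
    and f2: "integrable M (\<lambda>x. (f x)\<^sup>2)" and "0 \<le> expectation f"
  shows "(expectation f)\<^sup>2 \<le> expectation (\<lambda>x. (f x)\<^sup>2) * prob {x \<in> space M. 0 < f x}"
proof -
  define S where "S = {x \<in> space M. 0 < f x}"
  define f' where "f' x = max (f x) 0" for x
  have [measurable]: "S \<in> sets M" "f' \<in> borel_measurable M"
    unfolding S_def f'_def[abs_def] by measurable
  have "integrable M f" by (rule square_integrable_imp_integrable) (fact+)
  have f'2: "integrable M (\<lambda>x. (f' x)\<^sup>2)"
    by (rule Bochner_Integration.integrable_bound[OF f2]) (auto simp: f'_def max_def)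
  have f': "integrable M f'" by (rule square_integrable_imp_integrable) (fact+)
  have ind2: "(\<lambda>x. (indicator S x :: real)\<^sup>2) = indicator S"
    by (auto simp: indicator_def)
  have "(expectation f)\<^sup>2 \<le> (expectation f')\<^sup>2"
    using \<open>0 \<le> expectation f\<close> integral_mono[OF \<open>integrable M f\<close> f'] by (auto simp: f'_def intro: power_mono)
  also have "expectation f' = (\<integral>x. f' x * indicator S x \<partial>M)"
    by (rule Bochner_Integration.integral_cong) (auto simp: f'_def S_def indicator_def)
  also have "(\<dots>)\<^sup>2 \<le> expectation (\<lambda>x. (f' x)\<^sup>2) * (\<integral>x. (indicator S x)\<^sup>2 \<partial>M)"
    by (rule Cauchy_Schwarz_integral) (auto simp: f'2 ind2 emeasure_eq_measure)
  also have "\<dots> = expectation (\<lambda>x. (f' x)\<^sup>2) * prob S"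
    by (simp add: ind2 Int_absorb2 sets.sets_into_space)
  also have "\<dots> \<le> expectation (\<lambda>x. (f x)\<^sup>2) * prob S"
    by (intro mult_right_mono integral_mono f'2 f2) (auto simp: f'_def max_def)
  finally show ?thesis unfolding S_def .
qed

lemma (in prob_space) AE_in_if_mixture_law:
  fixes Z :: "'a \<Rightarrow> real"
  assumes law: "\<And>B. B \<in> sets borel \<Longrightarrow>
      prob {\<omega> \<in> space M. Z \<omega> \<in> B} = (\<integral>\<omega>. (\<Sum>i\<in>I. w i \<omega> * indicator B (v i \<omega>)) \<partial>M)"
    and w_sum: "\<And>\<omega>. \<omega> \<in> space M \<Longrightarrow> (\<Sum>i\<in>I. w i \<omega>) = 1"
    and v_in: "\<And>i \<omega>. i \<in> I \<Longrightarrow> \<omega> \<in> space M \<Longrightarrow> v i \<omega> \<in> C"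
    and "C \<in> sets borel"
  shows "AE \<omega> in M. Z \<omega> \<in> C"
proof -
  have "(\<Sum>i\<in>I. w i \<omega> * indicator C (v i \<omega>)) = 1" if "\<omega> \<in> space M" for \<omega>
  proof -
    have "(\<Sum>i\<in>I. w i \<omega> * indicator C (v i \<omega>)) = (\<Sum>i\<in>I. w i \<omega>)"
      by (rule sum.cong) (auto simp: v_in that)
    then show ?thesis using w_sum[OF that] by simp
  qed
  then have "prob {\<omega> \<in> space M. Z \<omega> \<in> C} = (\<integral>\<omega>. 1 \<partial>M)"
    unfolding law[OF \<open>C \<in> sets borel\<close>] by (intro Bochner_Integration.integral_cong) auto
  then have "AE \<omega> in M. \<omega> \<in> {\<omega> \<in> space M. Z \<omega> \<in> C}"
    by (intro AE_prob_1) (simp add: prob_space)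
  then show ?thesis by eventually_elim simp
qed

lemma inverse_mult_div_le_of_square_le:
  fixes a b c e P :: real
  assumes "a\<^sup>2 \<le> c * P" "P \<le> b * e" "a \<noteq> 0" "0 \<le> b" "0 \<le> c"
  shows "1 / b * (a\<^sup>2 / c) \<le> e"
proof -
  have "a\<^sup>2 \<le> b * c * e"
    using assms(1) mult_left_mono[OF assms(2,5)] by (simp add: ac_simps)
  moreover have "0 < a\<^sup>2" using assms(3) by simp
  ultimately have "0 < b" "0 < c" using assms(4,5) by (auto simp: zero_less_mult_iff less_le)
  with \<open>a\<^sup>2 \<le> b * c * e\<close> show ?thesis by (simp add: field_simps)
qed

lemma abs_margin_le_1:
  assumes "prob_space Q" "2 \<le> K" "i \<in> {1..K}"
  shows "\<bar>margin Q K x i\<bar> \<le> 1"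
proof -
  have "(if i = 1 then 2 else 1) \<in> {1..K} - {i}" using assms by auto
  then obtain c where "Max ((\<lambda>c. votes Q x c) ` ({1..K} - {i})) = votes Q x c"
    using Max_in[of "(\<lambda>c. votes Q x c) ` ({1..K} - {i})"] by fastforce
  moreover have "0 \<le> votes Q x c" "votes Q x c \<le> 1" for c
    unfolding votes_def using prob_space.prob_le_1[OF assms(1)] by auto
  ultimately show ?thesis unfolding margin_def by (smt (verit))
qed

lemma margin_nonpos_if_other_margin_pos:
  assumes "i \<in> {1..K}" "i' \<in> {1..K}" "i \<noteq> i'" "0 < margin Q K x i"
  shows "margin Q K x i' \<le> 0"
proof -
  have "votes Q x i' \<le> Max ((\<lambda>c. votes Q x c) ` ({1..K} - {i}))"
    "votes Q x i \<le> Max ((\<lambda>c. votes Q x c) ` ({1..K} - {i'}))"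
    using assms by auto
  with assms(4) show ?thesis unfolding margin_def by linarith
qed

definition max_posterior :: "(nat \<Rightarrow> 'a \<Rightarrow> real) \<Rightarrow> nat \<Rightarrow> 'a \<Rightarrow> real" where
  "max_posterior \<eta> K x = Max ((\<lambda>j. \<eta> j x) ` {1..K})"

definition max_row_sum :: "(nat \<Rightarrow> nat \<Rightarrow> real) \<Rightarrow> nat \<Rightarrow> real" where
  "max_row_sum p K = Max ((\<lambda>i. \<Sum>j=1..K. p i j) ` {1..K})"

lemma max_posterior_ge: "j \<in> {1..K} \<Longrightarrow> \<eta> j x \<le> max_posterior \<eta> K x"
  unfolding max_posterior_def by simp

lemma max_posterior_nonneg:
  assumes "1 \<le> K" "\<And>j. j \<in> {1..K} \<Longrightarrow> 0 \<le> \<eta> j x"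
  shows "0 \<le> max_posterior \<eta> K x"
  using assms max_posterior_ge[of 1 K \<eta> x] by (meson atLeastAtMost_iff order_refl order_trans)

lemma max_posterior_le_1:
  assumes "1 \<le> K" "\<And>j. j \<in> {1..K} \<Longrightarrow> 0 \<le> \<eta> j x" "(\<Sum>j=1..K. \<eta> j x) = 1"
  shows "max_posterior \<eta> K x \<le> 1"
proof -
  have "max_posterior \<eta> K x \<in> (\<lambda>j. \<eta> j x) ` {1..K}"
    unfolding max_posterior_def by (rule Max_in) (use assms(1) in auto)
  then obtain j where "j \<in> {1..K}" "max_posterior \<eta> K x = \<eta> j x" by blast
  moreover have "\<eta> j x \<le> (\<Sum>j=1..K. \<eta> j x)" if "j \<in> {1..K}" for j
    using that assms(2) by (intro member_le_sum) auto
  ultimately show ?thesis using assms(3) by simp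
qed

lemma max_row_sum_nonneg:
  assumes "1 \<le> K" "\<And>i j. i \<in> {1..K} \<Longrightarrow> j \<in> {1..K} \<Longrightarrow> 0 \<le> p i j"
  shows "0 \<le> max_row_sum p K"
proof -
  have "0 \<le> (\<Sum>j=1..K. p 1 j)" using assms by (intro sum_nonneg) auto
  also have "\<dots> \<le> max_row_sum p K" unfolding max_row_sum_def using assms(1) by simp
  finally show ?thesis .
qed

lemma sum_noisy_post:
  assumes "\<And>j. j \<in> {1..K} \<Longrightarrow> (\<Sum>i=1..K. p i j) = 1"
  shows "(\<Sum>i=1..K. noisy_post p \<eta> K i x) = (\<Sum>j=1..K. \<eta> j x)"
proof -
  have "(\<Sum>i=1..K. noisy_post p \<eta> K i x) = (\<Sum>j=1..K. (\<Sum>i=1..K. p i j) * \<eta> j x)"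
    unfolding noisy_post_def by (subst sum.swap) (simp add: sum_distrib_right)
  then show ?thesis using assms by simp
qed

lemma noisy_post_le_max_row_sum:
  assumes "i \<in> {1..K}" "\<And>j. j \<in> {1..K} \<Longrightarrow> 0 \<le> p i j" "0 \<le> max_posterior \<eta> K x"
  shows "noisy_post p \<eta> K i x \<le> max_row_sum p K * max_posterior \<eta> K x"
proof -
  have "noisy_post p \<eta> K i x \<le> (\<Sum>j=1..K. p i j * max_posterior \<eta> K x)"
    unfolding noisy_post_def using assms(2)
    by (intro sum_mono mult_left_mono max_posterior_ge) auto
  also have "\<dots> = (\<Sum>j=1..K. p i j) * max_posterior \<eta> K x" by (simp add: sum_distrib_right)
  also have "\<dots> \<le> max_row_sum p K * max_posterior \<eta> K x"
    unfolding max_row_sum_def using assms(1,3) by (intro mult_right_mono Max_ge) auto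
  finally show ?thesis .
qed

lemma sum_noisy_post_margin_pos_le:
  assumes "1 \<le> K"
    and "\<And>i j. i \<in> {1..K} \<Longrightarrow> j \<in> {1..K} \<Longrightarrow> 0 \<le> p i j"
    and "\<And>j. j \<in> {1..K} \<Longrightarrow> 0 \<le> \<eta> j x"
  shows "(\<Sum>i=1..K. noisy_post p \<eta> K i x * indicator {0<..} (margin Q K x i))
           \<le> max_row_sum p K * max_posterior \<eta> K x"
proof (cases "\<exists>i\<in>{1..K}. 0 < margin Q K x i")
  case True
  then obtain i where i: "i \<in> {1..K}" "0 < margin Q K x i" by blast
  have "(\<Sum>i=1..K. noisy_post p \<eta> K i x * indicator {0<..} (margin Q K x i))
      = (\<Sum>i\<in>{i}. noisy_post p \<eta> K i x * indicator {0<..} (margin Q K x i))"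
    using i(1) margin_nonpos_if_other_margin_pos[OF i(1) _ _ i(2)]
    by (intro sum.mono_neutral_right) (auto simp: indicator_def not_less[symmetric])
  also have "\<dots> = noisy_post p \<eta> K i x" using i(2) by simp
  also have "\<dots> \<le> max_row_sum p K * max_posterior \<eta> K x"
    using i(1) assms by (intro noisy_post_le_max_row_sum max_posterior_nonneg) auto
  finally show ?thesis .
next
  case False
  then have "(\<Sum>i=1..K. noisy_post p \<eta> K i x * indicator {0<..} (margin Q K x i)) = 0"
    by (intro sum.neutral) auto
  moreover have "0 \<le> max_row_sum p K" "0 \<le> max_posterior \<eta> K x"
    using assms by (auto intro: max_row_sum_nonneg max_posterior_nonneg)
  ultimately show ?thesis by simp
qed

lemma (in prob_space) integrable_max_posterior:
  assumes [measurable]: "X \<in> borel_measurable M"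
    and \<eta>_meas: "\<And>j. j \<in> {1..K} \<Longrightarrow> \<eta> j \<in> borel_measurable borel"
    and "1 \<le> K" "\<And>j x. j \<in> {1..K} \<Longrightarrow> 0 \<le> \<eta> j x" "\<And>x. (\<Sum>j=1..K. \<eta> j x) = 1"
  shows "integrable M (\<lambda>\<omega>. max_posterior \<eta> K (X \<omega>))"
proof (rule integrable_const_bound[where B = 1])
  have "max_posterior \<eta> K \<in> borel_measurable borel"
    unfolding max_posterior_def[abs_def] by (intro borel_measurable_Max \<eta>_meas) auto
  then show "(\<lambda>\<omega>. max_posterior \<eta> K (X \<omega>)) \<in> borel_measurable M" by measurable
  show "AE \<omega> in M. norm (max_posterior \<eta> K (X \<omega>)) \<le> 1"
  proof (intro AE_I2)
    fix \<omega>
    have "0 \<le> max_posterior \<eta> K (X \<omega>)" "max_posterior \<eta> K (X \<omega>) \<le> 1"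
      using assms(3-5) by (auto intro!: max_posterior_nonneg max_posterior_le_1)
    then show "norm (max_posterior \<eta> K (X \<omega>)) \<le> 1" by simp
  qed
qed

lemma (in prob_space) bayes_risk_eq:
  assumes "integrable M (\<lambda>\<omega>. max_posterior \<eta> K (X \<omega>))"
  shows "bayes_risk M X \<eta> K = 1 - (\<integral>\<omega>. max_posterior \<eta> K (X \<omega>) \<partial>M)"
  using assms by (simp add: bayes_risk_def max_posterior_def prob_space)

lemma (in prob_space) prob_margin_pos_le:
  assumes law: "prob {\<omega> \<in> space M. 0 < Z \<omega>}
      = (\<integral>\<omega>. (\<Sum>i=1..K. noisy_post p \<eta> K i (X \<omega>) * indicator {0<..} (margin Q K (X \<omega>) i)) \<partial>M)"
    and "integrable M (\<lambda>\<omega>. max_posterior \<eta> K (X \<omega>))" "1 \<le> K"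
    and "\<And>i j. i \<in> {1..K} \<Longrightarrow> j \<in> {1..K} \<Longrightarrow> 0 \<le> p i j"
    and "\<And>j x. j \<in> {1..K} \<Longrightarrow> 0 \<le> \<eta> j x"
  shows "prob {\<omega> \<in> space M. 0 < Z \<omega>} \<le> max_row_sum p K * (\<integral>\<omega>. max_posterior \<eta> K (X \<omega>) \<partial>M)"
proof -
  have "prob {\<omega> \<in> space M. 0 < Z \<omega>} \<le> (\<integral>\<omega>. max_row_sum p K * max_posterior \<eta> K (X \<omega>) \<partial>M)"
    unfolding law using assms(2-)
    by (intro integral_mono' sum_noisy_post_margin_pos_le mult_nonneg_nonneg
        max_row_sum_nonneg max_posterior_nonneg) auto
  then show ?thesis by simp
qed

theorem proposition1:
  fixes M :: "'w measure"
    and K :: nat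
    and Xset :: "'a::euclidean_space set"
    and X :: "'w \<Rightarrow> 'a" and Y Yhat :: "'w \<Rightarrow> nat"
    and \<eta> :: "nat \<Rightarrow> 'a \<Rightarrow> real"
    and p :: "nat \<Rightarrow> nat \<Rightarrow> real"
    and H :: "('a \<Rightarrow> nat) set"
    and Q :: "('a \<Rightarrow> nat) measure"
    and Mhat :: "'w \<Rightarrow> real"
  assumes K2: "K \<ge> 2"
    and M_prob: "prob_space M"
    and X_meas: "X \<in> borel_measurable M"
    and X_range: "\<forall>\<omega>\<in>space M. X \<omega> \<in> Xset"
    and Y_meas: "Y \<in> measurable M (count_space UNIV)"
    and Yhat_meas: "Yhat \<in> measurable M (count_space UNIV)"
    and Y_range: "\<forall>\<omega>\<in>space M. Y \<omega> \<in> {1..K}"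
    and Yhat_range: "\<forall>\<omega>\<in>space M. Yhat \<omega> \<in> {1..K}"
    \<comment> \<open>eta j x is (a regular version of) P(Y = j | X = x)\<close>
    and eta_meas: "\<forall>j\<in>{1..K}. \<eta> j \<in> borel_measurable borel"
    and eta_nonneg: "\<forall>j\<in>{1..K}. \<forall>x. \<eta> j x \<ge> 0"
    and eta_sum: "\<forall>x. (\<Sum>j=1..K. \<eta> j x) = 1"
    and eta_cond: "\<forall>j\<in>{1..K}. \<forall>A\<in>sets borel.
        measure M {\<omega> \<in> space M. X \<omega> \<in> A \<and> Y \<omega> = j}
          = (\<integral>\<omega>. indicator A (X \<omega>) * \<eta> j (X \<omega>) \<partial>M)"
    \<comment> \<open>P(Yhat = i | Y = j) = p i j, and Yhat conditionally independent of X given Y\<close>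
    and p_nonneg: "\<forall>i\<in>{1..K}. \<forall>j\<in>{1..K}. p i j \<ge> 0"
    and p_sum: "\<forall>j\<in>{1..K}. (\<Sum>i=1..K. p i j) = 1"
    and noise_ci: "\<forall>i\<in>{1..K}. \<forall>j\<in>{1..K}. \<forall>A\<in>sets borel.
        measure M {\<omega> \<in> space M. X \<omega> \<in> A \<and> Y \<omega> = j \<and> Yhat \<omega> = i}
          = p i j * measure M {\<omega> \<in> space M. X \<omega> \<in> A \<and> Y \<omega> = j}"
    \<comment> \<open>Q is a probability distribution on the hypothesis class H\<close>
    and H_class: "\<forall>h\<in>H. \<forall>x\<in>Xset. h x \<in> {1..K}"
    and Q_prob: "prob_space Q"
    and Q_space: "space Q \<subseteq> H"
    and Q_sets: "\<forall>x c. {h \<in> space Q. h x = c} \<in> sets Q"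
    and margin_meas: "\<forall>i\<in>{1..K}. (\<lambda>x. margin Q K x i) \<in> borel_measurable borel"
    \<comment> \<open>Mhat given X = x equals margin Q K x i with probability P(Yhat = i | X = x)\<close>
    and Mhat_meas: "Mhat \<in> borel_measurable M"
    and Mhat_law: "\<forall>A\<in>sets borel. \<forall>B\<in>sets borel.
        measure M {\<omega> \<in> space M. X \<omega> \<in> A \<and> Mhat \<omega> \<in> B}
          = (\<integral>\<omega>. indicator A (X \<omega>) *
               (\<Sum>i=1..K. noisy_post p \<eta> K i (X \<omega>) * indicator B (margin Q K (X \<omega>) i)) \<partial>M)"
    and mu1_pos: "(\<integral>\<omega>. Mhat \<omega> \<partial>M) > 0"
  shows "bayes_risk M X \<eta> K
           \<le> 1 - (1 / Max ((\<lambda>i. \<Sum>j=1..K. p i j) ` {1..K}))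
                 * ((\<integral>\<omega>. Mhat \<omega> \<partial>M)\<^sup>2 / (\<integral>\<omega>. (Mhat \<omega>)\<^sup>2 \<partial>M))"
proof -
  interpret prob_space M by (rule M_prob)
  have "1 \<le> K" using K2 by simp
  have law: "prob {\<omega> \<in> space M. Mhat \<omega> \<in> B}
      = (\<integral>\<omega>. (\<Sum>i=1..K. noisy_post p \<eta> K i (X \<omega>) * indicator B (margin Q K (X \<omega>) i)) \<partial>M)"
    if "B \<in> sets borel" for B
    using Mhat_law[rule_format, of UNIV B] that by simp
  have "AE \<omega> in M. Mhat \<omega> \<in> {-1..1}"
    using sum_noisy_post[of K p \<eta>] p_sum eta_sum abs_margin_le_1[OF Q_prob K2]
    by (intro AE_in_if_mixture_law[OF law]) (auto simp: abs_le_iff)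
  then have "integrable M (\<lambda>\<omega>. (Mhat \<omega>)\<^sup>2)"
    using Mhat_meas by (intro integrable_const_bound[where B = 1]) (auto simp: abs_square_le_1)
  then have moments: "(\<integral>\<omega>. Mhat \<omega> \<partial>M)\<^sup>2 \<le> (\<integral>\<omega>. (Mhat \<omega>)\<^sup>2 \<partial>M) * prob {\<omega> \<in> space M. 0 < Mhat \<omega>}"
    using mu1_pos by (intro expectation_square_le_second_moment_prob_pos Mhat_meas) auto
  have max_post_int: "integrable M (\<lambda>\<omega>. max_posterior \<eta> K (X \<omega>))"
    using \<open>1 \<le> K\<close> eta_meas eta_nonneg eta_sum by (intro integrable_max_posterior X_meas) auto
  have "prob {\<omega> \<in> space M. 0 < Mhat \<omega>} \<le> max_row_sum p K * (\<integral>\<omega>. max_posterior \<eta> K (X \<omega>) \<partial>M)"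
    using law[of "{0<..}"] max_post_int \<open>1 \<le> K\<close> p_nonneg eta_nonneg
    by (intro prob_margin_pos_le) auto
  with moments have "1 / max_row_sum p K * ((\<integral>\<omega>. Mhat \<omega> \<partial>M)\<^sup>2 / (\<integral>\<omega>. (Mhat \<omega>)\<^sup>2 \<partial>M))
      \<le> (\<integral>\<omega>. max_posterior \<eta> K (X \<omega>) \<partial>M)"
    using mu1_pos \<open>1 \<le> K\<close> p_nonneg
    by (intro inverse_mult_div_le_of_square_le max_row_sum_nonneg) auto
  then show ?thesis unfolding bayes_risk_eq[OF max_post_int] max_row_sum_def by simp
qed

end
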